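(* The only cell-preserving, decoration-preserving automorphism of the decorated combinatorial tiling $K$ is the identity map.
   Context: $K$ is the decorated combinatorial tiling: a 2-dimensional CW-complex homeomorphic to the open disk, built as follows. A decorated pentagon has boundary vertices $v_1,\dots,v_5$ in cyclic order (indices mod 5) with corner labels $1,\dots,5$, corner $v_i$ labelled $i$. The rule $\omega$ adds a vertex $m_i$ inside each edge $v_iv_{i+1}$, interior vertices $c_1,\dots,c_5$, edges $c_ic_{i+1}$, $c_im_i$, and replaces the face by the central pentagon $c_1\cdots c_5$ (label $i+1$ at $c_i$) and petals $v_i\,m_i\,c_i\,c_{i-1}\,m_{i-1}$ with labels $i,i+1,i+2,i+3,i+4$ (mod 5) at these corners. $K_0$ is one decorated pentagon, $K_n=\omega^n(K_0)$, $K_n$ embeds label-preservingly onto the central superpentagon $\omega^n(\text{central face of }\omega(K_0))$ of $K_{n+1}$, and $K$ is the direct limit. Decoration-preserving means corner labels are preserved. *)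

theory Defs
  imports Main
begin

text \<open>
Corner labels 1..5 are encoded modulo 5 as 0..4 (label 5 is encoded as 0), so that
"indices mod 5" is literally arithmetic mod 5.  Every face carries the labels
0,1,2,3,4 at its corners in cyclic (counterclockwise) order; corner l of a face is its
corner labelled l, and side s of a face is the edge from corner s to corner (s+1) mod 5.

Faces of K_n are words of length n over {0,...,5}: the letters are read from the
coarsest subdivision step to the finest; letter i < 5 means "petal i" (the petal at
the old vertex v_i, i.e. v_i m_i c_i c_(i-1) m_(i-1)) and letter 5 means "central
pentagon".  The embedding K_n -> K_(n+1) onto the central
superpentagon is w |-> 5 # w.

Corners are pairs (w, l), sides are pairs (w, s).
\<close>

definition wword :: "nat \<Rightarrow> nat list \<Rightarrow> bool" where
  "wword n w \<longleftrightarrow> length w = n \<and> (\<forall>x\<in>set w. x < 6)"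

text \<open>Gluing of sides in K_n (each interior side is glued, reversing orientation, to
exactly one other side).\<close>

inductive glued :: "nat \<Rightarrow> nat list \<times> nat \<Rightarrow> nat list \<times> nat \<Rightarrow> bool" where
  g_sym: "glued n a b \<Longrightarrow> glued n b a"
| g_old: "glued n (u, s) (u', s') \<Longrightarrow>
     glued (Suc n) (u @ [s], s) (u' @ [(s' + 1) mod 5], s')"
| g_cen: "wword n u \<Longrightarrow> j < 5 \<Longrightarrow>
     glued (Suc n) (u @ [5], (j + 1) mod 5) (u @ [(j + 1) mod 5], (j + 3) mod 5)"
| g_pet: "wword n u \<Longrightarrow> i < 5 \<Longrightarrow>
     glued (Suc n) (u @ [i], (i + 1) mod 5) (u @ [(i + 1) mod 5], (i + 4) mod 5)"

text \<open>Identification of corners in K_n (corners that are the same vertex).\<close>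

inductive vglue :: "nat \<Rightarrow> nat list \<times> nat \<Rightarrow> nat list \<times> nat \<Rightarrow> bool" where
  v_refl: "wword n w \<Longrightarrow> l < 5 \<Longrightarrow> vglue n (w, l) (w, l)"
| v_sym: "vglue n a b \<Longrightarrow> vglue n b a"
| v_trans: "vglue n a b \<Longrightarrow> vglue n b c \<Longrightarrow> vglue n a c"
| v_old: "vglue n (u, l) (u', l') \<Longrightarrow> vglue (Suc n) (u @ [l], l) (u' @ [l'], l')"
| v_mid: "glued n (u, s) (u', s') \<Longrightarrow>
     vglue (Suc n) (u @ [s], (s + 1) mod 5) (u' @ [s'], (s' + 1) mod 5)"
| v_m: "wword n u \<Longrightarrow> j < 5 \<Longrightarrow>
     vglue (Suc n) (u @ [j], (j + 1) mod 5) (u @ [(j + 1) mod 5], j)"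
| v_c1: "wword n u \<Longrightarrow> j < 5 \<Longrightarrow>
     vglue (Suc n) (u @ [5], (j + 1) mod 5) (u @ [j], (j + 2) mod 5)"
| v_c2: "wword n u \<Longrightarrow> j < 5 \<Longrightarrow>
     vglue (Suc n) (u @ [5], (j + 1) mod 5) (u @ [(j + 1) mod 5], (j + 4) mod 5)"

text \<open>Direct limit: lift a corner/side of K_m to level n \<ge> m via the central embeddings.\<close>

definition liftc :: "nat \<Rightarrow> nat list \<times> nat \<Rightarrow> nat list \<times> nat" where
  "liftc n c = (replicate (n - length (fst c)) 5 @ fst c, snd c)"

definition vrelK :: "nat list \<times> nat \<Rightarrow> nat list \<times> nat \<Rightarrow> bool" where
  "vrelK a b \<longleftrightarrow> (\<exists>n. length (fst a) \<le> n \<and> length (fst b) \<le> n \<and>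
                       vglue n (liftc n a) (liftc n b))"

definition erelK :: "nat list \<times> nat \<Rightarrow> nat list \<times> nat \<Rightarrow> bool" where
  "erelK a b \<longleftrightarrow> (\<exists>n. length (fst a) \<le> n \<and> length (fst b) \<le> n \<and>
       ((liftc n a = liftc n b \<and> wword n (fst (liftc n a)) \<and> snd a < 5)
        \<or> glued n (liftc n a) (liftc n b)))"

text \<open>Cells of K.  Faces: words over {0..5} with no leading central letter 5
(canonical representatives modulo w ~ 5 # w).  Vertices: classes of corners.
Edges: classes of sides.\<close>

definition KF :: "nat list set" where
  "KF = {w. (\<forall>x\<in>set w. x < 6) \<and> (w = [] \<or> hd w \<noteq> 5)}"

definition vcls :: "nat list \<times> nat \<Rightarrow> (nat list \<times> nat) set" where
  "vcls a = {b. vrelK a b}"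

definition ecls :: "nat list \<times> nat \<Rightarrow> (nat list \<times> nat) set" where
  "ecls a = {b. erelK a b}"

definition KV :: "(nat list \<times> nat) set set" where
  "KV = {vcls (f, l) | f l. f \<in> KF \<and> l < 5}"

definition KE :: "(nat list \<times> nat) set set" where
  "KE = {ecls (f, s) | f s. f \<in> KF \<and> s < 5}"

definition corner :: "nat list \<Rightarrow> nat \<Rightarrow> (nat list \<times> nat) set" where
  "corner f l = vcls (f, l)"

definition incVF :: "(nat list \<times> nat) set \<Rightarrow> nat list \<Rightarrow> bool" where
  "incVF v f \<longleftrightarrow> (\<exists>l<5. v = corner f l)"

definition incEF :: "(nat list \<times> nat) set \<Rightarrow> nat list \<Rightarrow> bool" where
  "incEF e f \<longleftrightarrow> (\<exists>s<5. e = ecls (f, s))"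

definition incVE :: "(nat list \<times> nat) set \<Rightarrow> (nat list \<times> nat) set \<Rightarrow> bool" where
  "incVE v e \<longleftrightarrow> (\<exists>f s. f \<in> KF \<and> s < 5 \<and> e = ecls (f, s) \<and>
                     (v = vcls (f, s) \<or> v = vcls (f, (s + 1) mod 5)))"

definition cell_aut ::
  "((nat list \<times> nat) set \<Rightarrow> (nat list \<times> nat) set) \<Rightarrow>
   ((nat list \<times> nat) set \<Rightarrow> (nat list \<times> nat) set) \<Rightarrow> (nat list \<Rightarrow> nat list) \<Rightarrow> bool" where
  "cell_aut \<phi>V \<phi>E \<phi>F \<longleftrightarrow>
     bij_betw \<phi>V KV KV \<and> bij_betw \<phi>E KE KE \<and> bij_betw \<phi>F KF KF \<and>
     (\<forall>v\<in>KV. \<forall>e\<in>KE. incVE v e \<longleftrightarrow> incVE (\<phi>V v) (\<phi>E e)) \<and>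
     (\<forall>e\<in>KE. \<forall>f\<in>KF. incEF e f \<longleftrightarrow> incEF (\<phi>E e) (\<phi>F f)) \<and>
     (\<forall>v\<in>KV. \<forall>f\<in>KF. incVF v f \<longleftrightarrow> incVF (\<phi>V v) (\<phi>F f))"

definition decoration_preserving ::
  "((nat list \<times> nat) set \<Rightarrow> (nat list \<times> nat) set) \<Rightarrow> (nat list \<Rightarrow> nat list) \<Rightarrow> bool" where
  "decoration_preserving \<phi>V \<phi>F \<longleftrightarrow>
     (\<forall>f\<in>KF. \<forall>l<5. \<phi>V (corner f l) = corner (\<phi>F f) l)"

end

theory Submission
  imports Defs
begin

text \<open>
A cell automorphism preserving decorations acts on faces by a map \<open>\<theta>\<close> under which two corners
are the same vertex exactly when their images are.  Vertex identifications alone detect the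
type of a face: a face is a central pentagon iff each of its corners \<open>l\<close> is also corner \<open>l + 1\<close>
of some face, and it is petal \<open>i\<close> iff its corner \<open>i + 2\<close> is corner \<open>i + 1\<close> of a central
pentagon.  Hence \<open>\<theta>\<close> preserves the last letter of a face word, maps the children of a
superface to the children of one superface, and so induces an automorphism of the same kind on
parents.  Induction on word length (for the root face: on the length of its image) shows that
\<open>\<theta>\<close> is the identity.  Vertices are then fixed by decoration preservation, and edges because
the two ends of a side of a face are distinct vertices, which follows from invariants of the
vertex identification that record how each vertex was born in the subdivision.
\<close>

lemma less_5_cases:
  "(x::nat) < 5 \<Longrightarrow> (x = 0 \<Longrightarrow> P) \<Longrightarrow> (x = 1 \<Longrightarrow> P) \<Longrightarrow> (x = 2 \<Longrightarrow> P)
   \<Longrightarrow> (x = 3 \<Longrightarrow> P) \<Longrightarrow> (x = 4 \<Longrightarrow> P) \<Longrightarrow> P"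
  by linarith

lemma mod_5_shift_neq [simp]:
  "x < 5 \<Longrightarrow> Suc x mod 5 \<noteq> x" "x < 5 \<Longrightarrow> x \<noteq> Suc x mod 5"
  "x < 5 \<Longrightarrow> (x + 2) mod 5 \<noteq> x" "x < 5 \<Longrightarrow> x \<noteq> (x + 2) mod 5"
  "x < 5 \<Longrightarrow> (x + 3) mod 5 \<noteq> x" "x < 5 \<Longrightarrow> x \<noteq> (x + 3) mod 5"
  "x < 5 \<Longrightarrow> (x + 4) mod 5 \<noteq> x" "x < 5 \<Longrightarrow> x \<noteq> (x + 4) mod 5"
  by (elim less_5_cases; simp)+

lemma mod_5_add_4_twice: "(((a::nat) + 4) mod 5 + 4) mod 5 = (a + 3) mod 5"
  by presburger

lemma glued_wf: "glued n a b \<Longrightarrow> wword n (fst a) \<and> wword n (fst b) \<and> snd a < 5 \<and> snd b < 5"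
  by (induction rule: glued.induct) (auto simp: wword_def)

lemma vglue_wf: "vglue n a b \<Longrightarrow> wword n (fst a) \<and> wword n (fst b) \<and> snd a < 5 \<and> snd b < 5"
proof (induction rule: vglue.induct)
  case (v_mid n u s u' s')
  then show ?case using glued_wf[OF v_mid] by (auto simp: wword_def)
qed (auto simp: wword_def)

lemma vglue_level_0: "vglue 0 a b \<Longrightarrow> a = b"
  by (induction "0::nat" a b rule: vglue.induct) auto

lemma glued_endpoints:
  "glued n a b \<Longrightarrow> vglue n a (fst b, (snd b + 1) mod 5) \<and> vglue n (fst a, (snd a + 1) mod 5) b"
proof (induction rule: glued.induct)
  case (g_sym n a b)
  then show ?case by (auto intro: vglue.v_sym)
next
  case (g_old n u s u' s')
  have wf: "wword n u'" "s' < 5" using glued_wf[OF g_old.hyps] by auto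
  have 1: "vglue (Suc n) (u @ [s], s) (u' @ [(s' + 1) mod 5], (s' + 1) mod 5)"
    using vglue.v_old[OF conjunct1[OF g_old.IH[simplified]]] by simp
  have 2: "vglue (Suc n) (u @ [s], (s + 1) mod 5) (u' @ [s'], (s' + 1) mod 5)"
    using vglue.v_mid[OF g_old.hyps] .
  have 3: "vglue (Suc n) (u' @ [s'], (s' + 1) mod 5) (u' @ [(s' + 1) mod 5], s')"
    using vglue.v_m[OF wf] .
  show ?case using 1 vglue.v_trans[OF 2 3] by simp
next
  case (g_cen n u j)
  have 1: "vglue (Suc n) (u @ [5], (j + 1) mod 5) (u @ [(j + 1) mod 5], (j + 4) mod 5)"
    using vglue.v_c2[OF g_cen] .
  have 2: "vglue (Suc n) (u @ [5], ((j + 1) mod 5 + 1) mod 5)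
                         (u @ [(j + 1) mod 5], ((j + 1) mod 5 + 2) mod 5)"
    using vglue.v_c1[OF g_cen(1), of "(j + 1) mod 5"] by simp
  have "((j + 3) mod 5 + 1) mod 5 = (j + 4) mod 5" "((j + 1) mod 5 + 2) mod 5 = (j + 3) mod 5"
    by presburger+
  then show ?case using 1 2 by simp
next
  case (g_pet n u i)
  have 1: "vglue (Suc n) (u @ [i], (i + 1) mod 5) (u @ [(i + 1) mod 5], i)"
    using vglue.v_m[OF g_pet] .
  have 2: "vglue (Suc n) (u @ [5], (i + 1) mod 5) (u @ [i], (i + 2) mod 5)"
    using vglue.v_c1[OF g_pet] .
  have 3: "vglue (Suc n) (u @ [5], (i + 1) mod 5) (u @ [(i + 1) mod 5], (i + 4) mod 5)"
    using vglue.v_c2[OF g_pet] .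
  have "((i + 4) mod 5 + 1) mod 5 = i" "((i + 1) mod 5 + 1) mod 5 = (i + 2) mod 5"
    using g_pet(2) by presburger+
  then show ?case using 1 vglue.v_trans[OF vglue.v_sym[OF 2] 3] by simp
qed

lemma glued_central_embed:
  "glued n a b \<Longrightarrow> glued (Suc n) (5 # fst a, snd a) (5 # fst b, snd b)"
proof (induction rule: glued.induct)
  case (g_sym n a b)
  show ?case by (rule glued.g_sym[OF g_sym.IH])
next
  case (g_old n u s u' s')
  then show ?case using glued.g_old[OF g_old.IH[simplified]] by simp
next
  case (g_cen n u j)
  then have "wword (Suc n) (5 # u)" by (auto simp: wword_def)
  then show ?case using glued.g_cen[of "Suc n" "5 # u" j] g_cen by simp
next
  case (g_pet n u i)
  then have "wword (Suc n) (5 # u)" by (auto simp: wword_def)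
  then show ?case using glued.g_pet[of "Suc n" "5 # u" i] g_pet by simp
qed

lemma vglue_central_embed:
  "vglue n a b \<Longrightarrow> vglue (Suc n) (5 # fst a, snd a) (5 # fst b, snd b)"
proof (induction rule: vglue.induct)
  case (v_refl n w l)
  then have "wword (Suc n) (5 # w)" by (auto simp: wword_def)
  then show ?case using vglue.v_refl v_refl by simp
next
  case (v_sym n a b)
  show ?case by (rule vglue.v_sym[OF v_sym.IH])
next
  case (v_trans n a b c)
  then show ?case by (metis vglue.v_trans)
next
  case (v_old n u l u' l')
  then show ?case using vglue.v_old[OF v_old.IH[simplified]] by simp
next
  case (v_mid n u s u' s')
  then show ?case using vglue.v_mid[OF glued_central_embed[OF v_mid, simplified]] by simp
next
  case (v_m n u j)
  then have "wword (Suc n) (5 # u)" by (auto simp: wword_def)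
  then show ?case using vglue.v_m[of "Suc n" "5 # u" j] v_m by simp
next
  case (v_c1 n u j)
  then have "wword (Suc n) (5 # u)" by (auto simp: wword_def)
  then show ?case using vglue.v_c1[of "Suc n" "5 # u" j] v_c1 by simp
next
  case (v_c2 n u j)
  then have "wword (Suc n) (5 # u)" by (auto simp: wword_def)
  then show ?case using vglue.v_c2[of "Suc n" "5 # u" j] v_c2 by simp
qed

lemma vglue_central_embed_iter:
  "vglue n a b \<Longrightarrow> vglue (k + n) (replicate k 5 @ fst a, snd a) (replicate k 5 @ fst b, snd b)"
  by (induction k) (auto dest: vglue_central_embed)

section \<open>Invariants of the vertex identification\<close>

text \<open>Corner \<open>(u @ [l], l)\<close> of petal \<open>l\<close> is the old vertex \<open>v\<^sub>l\<close>, i.e. corner \<open>(u, l)\<close>.\<close>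

definition old_corner :: "nat list \<times> nat \<Rightarrow> bool" where
  "old_corner c \<longleftrightarrow> fst c \<noteq> [] \<and> last (fst c) = snd c"

lemma vglue_old_corner_eq: "vglue n a b \<Longrightarrow> old_corner a = old_corner b"
proof (induction rule: vglue.induct)
  case (v_mid n u s u' s')
  then show ?case using glued_wf[OF v_mid] by (auto simp: old_corner_def)
next
  case (v_c1 n u j)
  from v_c1(2) show ?case by (elim less_5_cases) (simp_all add: old_corner_def)
next
  case (v_c2 n u j)
  from v_c2(2) show ?case by (elim less_5_cases) (simp_all add: old_corner_def)
qed (auto simp: old_corner_def)

lemma vglue_old_corner_butlast:
  "vglue (Suc n) a b \<Longrightarrow> old_corner a \<Longrightarrow> vglue n (butlast (fst a), snd a) (butlast (fst b), snd b)"
proof (induction "Suc n" a b rule: vglue.induct)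
  case (v_refl w l)
  then have "wword n (butlast w)" by (auto simp: wword_def old_corner_def dest: in_set_butlastD)
  then show ?case using v_refl vglue.v_refl by auto
next
  case (v_sym a b)
  then show ?case using vglue_old_corner_eq[OF v_sym.hyps(1)] vglue.v_sym by metis
next
  case (v_trans a b c)
  then show ?case using vglue_old_corner_eq[OF v_trans.hyps(1)] vglue.v_trans by metis
next
  case (v_mid u s u' s')
  then show ?case using glued_wf[OF v_mid(1)] by (auto simp: old_corner_def)
qed (auto simp: old_corner_def)

definition strip_label :: "nat \<Rightarrow> nat list \<Rightarrow> nat list" where
  "strip_label l w = rev (dropWhile (\<lambda>x. x = l) (rev w))"

definition canon_face :: "nat list \<Rightarrow> nat list" where
  "canon_face u = dropWhile (\<lambda>x. x = 5) u"

text \<open>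
If the vertex at corner \<open>c\<close> is the interior vertex \<open>c\<^sub>j\<close> created when face \<open>u\<close> was
subdivided, then \<open>centre_birth c = Some (u, j)\<close>; midpoints \<open>m\<^sub>i\<close> give \<open>None\<close>.  Trailing
letters equal to the label are stripped first, since they only pass to an older vertex, and
leading central letters are dropped, so the value does not depend on the level.
\<close>

definition centre_birth :: "nat list \<times> nat \<Rightarrow> (nat list \<times> nat) option" where
  "centre_birth c =
     (let l = snd c; w = strip_label l (fst c) in
      if w = [] then Some ([], (l + 4) mod 5) else
      let a = last w; u = canon_face (butlast w) in
      if a = 5 then Some (u, (l + 4) mod 5)
      else if l = (a + 2) mod 5 then Some (u, a)
      else if l = (a + 3) mod 5 then Some (u, (a + 4) mod 5) else None)"

lemma centre_birth_snoc:
  "a \<noteq> l \<Longrightarrow> centre_birth (x @ [a], l) =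
    (if a = 5 then Some (canon_face x, (l + 4) mod 5)
     else if l = (a + 2) mod 5 then Some (canon_face x, a)
     else if l = (a + 3) mod 5 then Some (canon_face x, (a + 4) mod 5) else None)"
  by (simp add: centre_birth_def strip_label_def Let_def)

lemma centre_birth_old [simp]: "centre_birth (x @ [l], l) = centre_birth (x, l)"
  by (simp add: centre_birth_def strip_label_def)

lemma vglue_centre_birth_eq: "vglue n a b \<Longrightarrow> centre_birth a = centre_birth b"
proof (induction rule: vglue.induct)
  case (v_mid n u s u' s')
  have "s < 5" "s' < 5" using glued_wf[OF v_mid] by auto
  then show ?case by (elim less_5_cases; elim less_5_cases) (simp_all add: centre_birth_snoc)
next
  case (v_m n u j)
  from v_m(2) show ?case by (elim less_5_cases) (simp_all add: centre_birth_snoc)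
next
  case (v_c1 n u j)
  from v_c1(2) show ?case by (elim less_5_cases) (simp_all add: centre_birth_snoc)
next
  case (v_c2 n u j)
  from v_c2(2) show ?case by (elim less_5_cases) (simp_all add: centre_birth_snoc)
qed auto

definition vertex_at :: "nat \<Rightarrow> nat list \<times> nat \<Rightarrow> (nat list \<times> nat) set" where
  "vertex_at n c = {d. vglue n c d}"

lemma vertex_at_eqI: "vglue n c d \<Longrightarrow> vertex_at n c = vertex_at n d"
  unfolding vertex_at_def using vglue.v_trans vglue.v_sym by blast

lemma vertex_at_eqD:
  "vertex_at n c = vertex_at n d \<Longrightarrow> wword n (fst d) \<Longrightarrow> snd d < 5 \<Longrightarrow> vglue n c d"
  unfolding vertex_at_def using vglue.v_refl[of n "fst d" "snd d"] by auto

text \<open>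
For a corner at level \<open>n + 1\<close> that is a midpoint \<open>m\<^sub>a\<close> (corner \<open>a + 1\<close> of petal \<open>a\<close>) or
\<open>m\<^sub>a\<^sub>-\<^sub>1\<close> (corner \<open>a + 4\<close>), the two level-\<open>n\<close> vertices ending the side it subdivides.
\<close>

definition midpoint_ends :: "nat \<Rightarrow> nat list \<times> nat \<Rightarrow> (nat list \<times> nat) set set" where
  "midpoint_ends n c =
     (if fst c \<noteq> [] \<and> last (fst c) < 5 \<and> snd c = (last (fst c) + 1) mod 5
      then {vertex_at n (butlast (fst c), last (fst c)), vertex_at n (butlast (fst c), snd c)}
      else if fst c \<noteq> [] \<and> last (fst c) < 5 \<and> snd c = (last (fst c) + 4) mod 5
      then {vertex_at n (butlast (fst c), snd c), vertex_at n (butlast (fst c), last (fst c))}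
      else {})"

lemma midpoint_ends_1:
  "a < 5 \<Longrightarrow> midpoint_ends n (x @ [a], (a + 1) mod 5) = {vertex_at n (x, a), vertex_at n (x, (a + 1) mod 5)}"
  by (simp add: midpoint_ends_def)

lemma midpoint_ends_4:
  "a < 5 \<Longrightarrow> midpoint_ends n (x @ [a], (a + 4) mod 5) = {vertex_at n (x, (a + 4) mod 5), vertex_at n (x, a)}"
  by (elim less_5_cases) (simp_all add: midpoint_ends_def)

lemma vglue_midpoint_ends_eq:
  "vglue (Suc n) a b \<Longrightarrow> midpoint_ends n a = midpoint_ends n b"
proof (induction "Suc n" a b rule: vglue.induct)
  case (v_old u l u' l')
  have "l < 5" "l' < 5" using vglue_wf[OF v_old(1)] by auto
  then show ?case by (elim less_5_cases; elim less_5_cases) (simp_all add: midpoint_ends_def)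
next
  case (v_mid u s u' s')
  have s: "s < 5" "s' < 5" using glued_wf[OF v_mid(1)] by auto
  have "vertex_at n (u, s) = vertex_at n (u', (s' + 1) mod 5)"
       "vertex_at n (u, (s + 1) mod 5) = vertex_at n (u', s')"
    using glued_endpoints[OF v_mid(1)] vertex_at_eqI by auto
  moreover have "(s + 1) mod 5 \<noteq> (s + 4) mod 5" "(s' + 1) mod 5 \<noteq> (s' + 4) mod 5"
    using s by (elim less_5_cases; simp)+
  ultimately show ?case using s by (auto simp: midpoint_ends_def)
next
  case (v_m u j)
  have "j \<noteq> ((j + 1) mod 5 + 1) mod 5" "j = ((j + 1) mod 5 + 4) mod 5" "(j + 1) mod 5 \<noteq> (j + 4) mod 5"
    using v_m(2) by (elim less_5_cases; simp)+
  then show ?case using v_m by (auto simp: midpoint_ends_def)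
next
  case (v_c1 u j)
  have "(j + 2) mod 5 \<noteq> (j + 1) mod 5" "(j + 2) mod 5 \<noteq> (j + 4) mod 5"
    using v_c1(2) by (elim less_5_cases; simp)+
  then show ?case by (auto simp: midpoint_ends_def)
next
  case (v_c2 u j)
  have "(j + 4) mod 5 \<noteq> ((j + 1) mod 5 + 1) mod 5" "(j + 4) mod 5 \<noteq> ((j + 1) mod 5 + 4) mod 5"
    using v_c2(2) by (elim less_5_cases; simp)+
  then show ?case by (auto simp: midpoint_ends_def)
qed auto

lemma centre_birth_petal_eq:
  assumes "a < 5" "l < 5" "l' < 5" "a \<noteq> l" "a \<noteq> l'" "l \<noteq> l'"
    and "centre_birth (x @ [a], l) = centre_birth (x @ [a], l')"
  shows "{l, l'} = {(a + 1) mod 5, (a + 4) mod 5}"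
proof -
  have "l = (a + 1) mod 5 \<and> l' = (a + 4) mod 5 \<or> l = (a + 4) mod 5 \<and> l' = (a + 1) mod 5"
    using assms by (simp add: centre_birth_snoc split: if_split_asm) (elim less_5_cases; simp)
  then show ?thesis by auto
qed

lemma vglue_same_face_eq:
  "wword n w \<Longrightarrow> l < 5 \<Longrightarrow> l' < 5 \<Longrightarrow> vglue n (w, l) (w, l') \<Longrightarrow> l = l'"
proof (induction n arbitrary: w l l')
  case 0
  then show ?case using vglue_level_0 by auto
next
  case (Suc n)
  then obtain x a where w: "w = x @ [a]" "wword n x" "a < 6"
    by (cases w rule: rev_cases) (auto simp: wword_def)
  have distinct_below: "vertex_at n (x, i) \<noteq> vertex_at n (x, j)" if "i < 5" "j < 5" "i \<noteq> j" for i j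
    using Suc.IH[OF w(2) that(1,2)] vertex_at_eqD[of n "(x, i)" "(x, j)"] w(2) that by auto
  have g: "vglue (Suc n) (x @ [a], l) (x @ [a], l')" using Suc.prems w by simp
  show "l = l'"
  proof (rule ccontr)
    assume ne: "l \<noteq> l'"
    then have al: "a \<noteq> l" "a \<noteq> l'"
      using vglue_old_corner_eq[OF g] by (auto simp: old_corner_def)
    have birth: "centre_birth (x @ [a], l) = centre_birth (x @ [a], l')"
      using vglue_centre_birth_eq[OF g] .
    show False
    proof (cases "a = 5")
      case True
      then show False using birth al ne Suc.prems(2,3)
        by (simp add: centre_birth_snoc) (elim less_5_cases; simp)
    next
      case False
      then have a: "a < 5" using w by auto
      have "midpoint_ends n (x @ [a], (a + 1) mod 5) = midpoint_ends n (x @ [a], (a + 4) mod 5)"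
        using centre_birth_petal_eq[OF a Suc.prems(2,3) al ne birth] vglue_midpoint_ends_eq[OF g]
        by (auto simp: doubleton_eq_iff)
      then have "{vertex_at n (x, a), vertex_at n (x, (a + 1) mod 5)}
               = {vertex_at n (x, (a + 4) mod 5), vertex_at n (x, a)}"
        using midpoint_ends_1[OF a] midpoint_ends_4[OF a] by simp
      then show False
        using distinct_below[of "(a + 1) mod 5" "(a + 4) mod 5"] distinct_below[of "(a + 1) mod 5" a] a
        by (elim less_5_cases) (auto simp: doubleton_eq_iff)
    qed
  qed
qed

lemma vglue_liftc_mono:
  assumes "vglue n (liftc n a) (liftc n b)" "length (fst a) \<le> n" "length (fst b) \<le> n" "n \<le> N"
  shows "vglue N (liftc N a) (liftc N b)"
proof -
  have lift: "replicate (N - n) 5 @ fst (liftc n c) = fst (liftc N c)" if "length (fst c) \<le> n" for c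
  proof -
    have "N - length (fst c) = (N - n) + (n - length (fst c))" using that assms(4) by simp
    then show ?thesis by (simp add: liftc_def replicate_add)
  qed
  have "N - n + n = N" using assms(4) by simp
  then show ?thesis
    using vglue_central_embed_iter[OF assms(1), of "N - n"] lift[OF assms(2)] lift[OF assms(3)]
    by (simp add: liftc_def flip: append_assoc)
qed

lemma vrelK_refl: "\<forall>x\<in>set w. x < 6 \<Longrightarrow> l < 5 \<Longrightarrow> vrelK (w, l) (w, l)"
  unfolding vrelK_def
  by (rule exI[of _ "length w"]) (auto simp: liftc_def wword_def intro: vglue.v_refl)

lemma vrelK_sym: "vrelK a b \<Longrightarrow> vrelK b a"
  unfolding vrelK_def using vglue.v_sym by blast

lemma vrelK_trans: "vrelK a b \<Longrightarrow> vrelK b c \<Longrightarrow> vrelK a c"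
proof -
  assume "vrelK a b" "vrelK b c"
  then obtain n1 n2 where
    1: "length (fst a) \<le> n1" "length (fst b) \<le> n1" "vglue n1 (liftc n1 a) (liftc n1 b)" and
    2: "length (fst b) \<le> n2" "length (fst c) \<le> n2" "vglue n2 (liftc n2 b) (liftc n2 c)"
    unfolding vrelK_def by blast
  let ?N = "max n1 n2"
  have "vglue ?N (liftc ?N a) (liftc ?N b)" "vglue ?N (liftc ?N b) (liftc ?N c)"
    using vglue_liftc_mono[OF 1(3) 1(1,2)] vglue_liftc_mono[OF 2(3) 2(1,2)] by simp_all
  then show "vrelK a c" unfolding vrelK_def using 1 2
    by (intro exI[of _ ?N]) (auto intro: vglue.v_trans)
qed

lemma vcls_eq_iff_vrelK:
  "f \<in> KF \<Longrightarrow> g \<in> KF \<Longrightarrow> l < 5 \<Longrightarrow> m < 5 \<Longrightarrow> vcls (f, l) = vcls (g, m) \<longleftrightarrow> vrelK (f, l) (g, m)"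
  unfolding vcls_def KF_def using vrelK_refl[of g m] vrelK_sym vrelK_trans by blast

lemma canon_face_central_prefix [simp]: "canon_face (replicate k 5 @ u) = canon_face u"
  by (induction k) (simp_all add: canon_face_def)

lemma centre_birth_central_prefix:
  assumes "l < 5" shows "centre_birth (replicate k 5 @ w, l) = centre_birth (w, l)"
proof -
  have strip: "strip_label l (replicate k 5 @ w) =
      (if strip_label l w = [] then replicate k 5 else replicate k 5 @ strip_label l w)"
    using assms by (auto simp: strip_label_def dropWhile_append)
  show ?thesis
  proof (cases "strip_label l w = []")
    case True
    then show ?thesis using assms strip
      by (cases k) (auto simp: centre_birth_def canon_face_def dest: in_set_butlastD)
  next
    case False
    then show ?thesis using strip by (auto simp: centre_birth_def Let_def butlast_append)
  qed
qed

lemma old_corner_central_prefix: "l < 5 \<Longrightarrow> old_corner (replicate k 5 @ w, l) = old_corner (w, l)"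
  by (cases "w = []"; cases k) (auto simp: old_corner_def)

lemma vrelK_centre_birth_eq: "vrelK a b \<Longrightarrow> centre_birth a = centre_birth b \<and> old_corner a = old_corner b"
proof -
  assume "vrelK a b"
  then obtain n where g: "vglue n (liftc n a) (liftc n b)" unfolding vrelK_def by blast
  have "snd a < 5" "snd b < 5" using vglue_wf[OF g] by (auto simp: liftc_def)
  then show ?thesis
    using vglue_centre_birth_eq[OF g] vglue_old_corner_eq[OF g]
      centre_birth_central_prefix old_corner_central_prefix
    by (metis liftc_def prod.collapse)
qed

lemma vrelK_old_corner_iff: "vrelK (x @ [l], l) (y @ [m], m) \<longleftrightarrow> vrelK (x, l) (y, m)"
proof
  assume "vrelK (x @ [l], l) (y @ [m], m)"
  then obtain N where N: "Suc (length x) \<le> N" "Suc (length y) \<le> N"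
    "vglue N (replicate (N - Suc (length x)) 5 @ x @ [l], l) (replicate (N - Suc (length y)) 5 @ y @ [m], m)"
    unfolding vrelK_def liftc_def by auto
  then obtain n where n: "N = Suc n" by (cases N) auto
  have "vglue n (replicate (n - length x) 5 @ x, l) (replicate (n - length y) 5 @ y, m)"
    using vglue_old_corner_butlast[OF N(3)[unfolded n]] n by (simp add: old_corner_def butlast_append)
  then show "vrelK (x, l) (y, m)" unfolding vrelK_def liftc_def using N n
    by (intro exI[of _ n]) auto
next
  assume "vrelK (x, l) (y, m)"
  then obtain n where n: "length x \<le> n" "length y \<le> n"
    "vglue n (replicate (n - length x) 5 @ x, l) (replicate (n - length y) 5 @ y, m)"
    unfolding vrelK_def liftc_def by auto
  then show "vrelK (x @ [l], l) (y @ [m], m)"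
    unfolding vrelK_def liftc_def using vglue.v_old[OF n(3)]
    by (intro exI[of _ "Suc n"]) auto
qed

lemma vrelK_same_face_eq: "f \<in> KF \<Longrightarrow> l < 5 \<Longrightarrow> l' < 5 \<Longrightarrow> vrelK (f, l) (f, l') \<Longrightarrow> l = l'"
proof -
  assume f: "f \<in> KF" and l: "l < 5" "l' < 5" and "vrelK (f, l) (f, l')"
  then obtain n where n: "length f \<le> n"
    "vglue n (replicate (n - length f) 5 @ f, l) (replicate (n - length f) 5 @ f, l')"
    unfolding vrelK_def liftc_def by auto
  have "wword n (replicate (n - length f) 5 @ f)" using f n(1) by (auto simp: wword_def KF_def)
  then show ?thesis using vglue_same_face_eq[OF _ l n(2)] by simp
qed

section \<open>Recognising central pentagons and petals\<close>

text \<open>\<open>last_letter [] = 5\<close>: the root face \<open>[]\<close> is the central face of itself, as \<open>[] \<sim> [5]\<close>.\<close>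

definition last_letter :: "nat list \<Rightarrow> nat" where
  "last_letter f = (if f = [] then 5 else last f)"

definition subface :: "nat list \<Rightarrow> nat \<Rightarrow> nat list" where
  "subface x b = (if x = [] \<and> b = 5 then [] else x @ [b])"

lemma KF_subfaceE:
  assumes "f \<in> KF"
  obtains x b where "f = subface x b" "x \<in> KF" "b < 6"
proof (cases f rule: rev_cases)
  case Nil
  then show ?thesis using that[of "[]" 5] by (simp add: subface_def KF_def)
next
  case (snoc x b)
  then have "x = [] \<or> hd x \<noteq> 5" "\<not> (x = [] \<and> b = 5)"
    using assms by (cases x; auto simp: KF_def)+
  then show ?thesis using that[of x b] assms snoc by (auto simp: subface_def KF_def)
qed

lemma subface_KF: "x \<in> KF \<Longrightarrow> b < 6 \<Longrightarrow> subface x b \<in> KF"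
  by (cases x) (auto simp: subface_def KF_def)

lemma butlast_subface [simp]: "butlast (subface x b) = x"
  by (simp add: subface_def)

lemma last_letter_subface [simp]: "last_letter (subface x b) = b"
  by (simp add: subface_def last_letter_def)

lemma subface_petal: "b \<noteq> 5 \<Longrightarrow> subface x b = x @ [b]"
  by (simp add: subface_def)

lemma canon_face_KF: "x \<in> KF \<Longrightarrow> canon_face x = x"
  by (cases x) (auto simp: canon_face_def KF_def)

lemma vrelK_central_petal:
  assumes x: "x \<in> KF" and a: "a < 5"
  shows "vrelK (subface x 5, (a + 1) mod 5) (x @ [a], (a + 2) mod 5)"
proof -
  let ?n = "Suc (length x)"
  have "wword (length x) x" using x by (simp add: wword_def KF_def)
  then have "vglue ?n (x @ [5], (a + 1) mod 5) (x @ [a], (a + 2) mod 5)"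
    by (rule vglue.v_c1[OF _ a])
  moreover have "liftc ?n (subface x 5, l) = (x @ [5], l)" "liftc ?n (x @ [a], l) = (x @ [a], l)" for l
    by (cases x) (auto simp: liftc_def subface_def)
  moreover have "length (subface x 5) \<le> ?n" by (simp add: subface_def)
  ultimately show ?thesis unfolding vrelK_def by (intro exI[of _ ?n]) simp
qed

lemma centre_birth_central:
  "x \<in> KF \<Longrightarrow> l < 5 \<Longrightarrow>
    centre_birth (subface x 5, l) = Some (x, (l + 4) mod 5) \<and> \<not> old_corner (subface x 5, l)"
  by (cases "x = []")
     (simp_all add: subface_def centre_birth_def strip_label_def old_corner_def canon_face_KF Let_def)

lemma centre_birth_petal: "a < 5 \<Longrightarrow> centre_birth (x @ [a], (a + 2) mod 5) = Some (canon_face x, a)"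
  by (elim less_5_cases) (simp_all add: centre_birth_snoc)

lemma centre_birth_labels:
  "centre_birth (w, m) = Some (u, j) \<Longrightarrow> m < 5 \<Longrightarrow> m = (j + 1) mod 5 \<or> m = (j + 2) mod 5 \<or> m = (j + 4) mod 5"
  unfolding centre_birth_def Let_def
  by (auto split: if_split_asm simp: mod_5_add_4_twice) (elim less_5_cases; simp)+

lemma centre_birth_petal_corner:
  assumes b: "b < 5" and i: "i < 5" and ne: "b \<noteq> (i + 2) mod 5"
    and birth: "centre_birth (x @ [b], (i + 2) mod 5) = Some (y, i)"
  shows "b = i"
proof (cases "(i + 2) mod 5 = (b + 2) mod 5")
  case True
  then show ?thesis using b i by (elim less_5_cases; elim less_5_cases; simp)
next
  case False
  then have "(i + 2) mod 5 = (b + 3) mod 5" "i = (b + 4) mod 5"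
    using birth b centre_birth_snoc[OF ne] by (auto split: if_split_asm)
  then show ?thesis using b by (elim less_5_cases) simp_all
qed

text \<open>
Two properties of a face expressed through vertex identifications only, so that they are
preserved by face automorphisms; they characterise the last letter of the face word.
\<close>

definition central_face :: "nat list \<Rightarrow> bool" where
  "central_face f \<longleftrightarrow> (\<forall>l<5. \<exists>g\<in>KF. vrelK (f, l) (g, (l + 1) mod 5))"

definition petal_face :: "nat \<Rightarrow> nat list \<Rightarrow> bool" where
  "petal_face i f \<longleftrightarrow> (\<exists>g\<in>KF. central_face g \<and> vrelK (f, (i + 2) mod 5) (g, (i + 1) mod 5))"

lemma central_face_subface_iff:
  assumes x: "x \<in> KF" and b: "b < 6"
  shows "central_face (subface x b) \<longleftrightarrow> b = 5"
proof
  assume "b = 5"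
  show "central_face (subface x b)" unfolding central_face_def
  proof (intro allI impI)
    fix l :: nat assume l: "l < 5"
    let ?a = "(l + 4) mod 5"
    have "(?a + 1) mod 5 = l" "(?a + 2) mod 5 = (l + 1) mod 5" using l by (elim less_5_cases; simp)+
    then have "vrelK (subface x b, l) (x @ [?a], (l + 1) mod 5)"
      using vrelK_central_petal[OF x, of ?a] \<open>b = 5\<close> by simp
    moreover have "x @ [?a] \<in> KF" using subface_KF[OF x, of ?a] by (simp add: subface_petal)
    ultimately show "\<exists>g\<in>KF. vrelK (subface x b, l) (g, (l + 1) mod 5)" by blast
  qed
next
  assume c: "central_face (subface x b)"
  show "b = 5"
  proof (rule ccontr)
    assume "b \<noteq> 5"
    then have b5: "b < 5" and xb: "subface x b = x @ [b]" using b subface_petal by auto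
    have "(b + 2) mod 5 < 5" by simp
    have "\<forall>l<5. \<exists>g\<in>KF. vrelK (x @ [b], l) (g, (l + 1) mod 5)"
      using c unfolding central_face_def xb .
    then obtain g where g: "vrelK (x @ [b], (b + 2) mod 5) (g, ((b + 2) mod 5 + 1) mod 5)"
      using \<open>(b + 2) mod 5 < 5\<close> by blast
    have "centre_birth (g, ((b + 2) mod 5 + 1) mod 5) = Some (canon_face x, b)"
      using vrelK_centre_birth_eq[OF g] centre_birth_petal[OF b5, of x] by simp
    from centre_birth_labels[OF this] show False using b5 by (elim less_5_cases; simp)
  qed
qed

lemma central_face_iff: "f \<in> KF \<Longrightarrow> central_face f \<longleftrightarrow> last_letter f = 5"
  by (erule KF_subfaceE) (simp add: central_face_subface_iff)

lemma petal_face_subface_iff: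
  assumes x: "x \<in> KF" and b: "b < 6" and i: "i < 5"
  shows "petal_face i (subface x b) \<longleftrightarrow> b = i"
proof
  assume "b = i"
  then have "subface x b = x @ [i]" using i subface_petal by simp
  then have "vrelK (subface x b, (i + 2) mod 5) (subface x 5, (i + 1) mod 5)"
    using vrelK_sym[OF vrelK_central_petal[OF x i]] by simp
  moreover have "subface x 5 \<in> KF" "central_face (subface x 5)"
    using subface_KF[OF x] central_face_subface_iff[OF x] by auto
  ultimately show "petal_face i (subface x b)" unfolding petal_face_def by blast
next
  assume "petal_face i (subface x b)"
  then obtain g where g: "g \<in> KF" "central_face g" "vrelK (subface x b, (i + 2) mod 5) (g, (i + 1) mod 5)"
    unfolding petal_face_def by blast
  obtain y c where y: "g = subface y c" "y \<in> KF" "c < 6" using g(1) by (erule KF_subfaceE)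
  have "c = 5" using g(2) y(1) central_face_subface_iff[OF y(2,3)] by simp
  then have "centre_birth (g, (i + 1) mod 5) = Some (y, ((i + 1) mod 5 + 4) mod 5)"
    and "\<not> old_corner (g, (i + 1) mod 5)"
    using centre_birth_central[OF y(2), of "(i + 1) mod 5"] y(1) by simp_all
  moreover have "((i + 1) mod 5 + 4) mod 5 = i" using i by (elim less_5_cases; simp)
  ultimately have birth: "centre_birth (subface x b, (i + 2) mod 5) = Some (y, i)"
    and not_old: "\<not> old_corner (subface x b, (i + 2) mod 5)"
    using vrelK_centre_birth_eq[OF g(3)] by simp_all
  show "b = i"
  proof (cases "b = 5")
    case True
    have "((i + 2) mod 5 + 4) mod 5 \<noteq> i" using i by (elim less_5_cases; simp)
    then show ?thesis using centre_birth_central[OF x, of "(i + 2) mod 5"] birth True by simp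
  next
    case False
    then have b5: "b < 5" and xb: "subface x b = x @ [b]" and ne: "b \<noteq> (i + 2) mod 5"
      using b not_old subface_petal by (auto simp: old_corner_def)
    have "centre_birth (x @ [b], (i + 2) mod 5) = Some (y, i)" using birth xb by simp
    then show ?thesis by (rule centre_birth_petal_corner[OF b5 i ne])
  qed
qed

lemma petal_face_iff: "f \<in> KF \<Longrightarrow> i < 5 \<Longrightarrow> petal_face i f \<longleftrightarrow> last_letter f = i"
  by (erule KF_subfaceE) (simp add: petal_face_subface_iff)

section \<open>Face automorphisms\<close>

definition face_aut :: "(nat list \<Rightarrow> nat list) \<Rightarrow> bool" where
  "face_aut \<theta> \<longleftrightarrow> (\<forall>f\<in>KF. \<theta> f \<in> KF) \<and> (\<forall>g\<in>KF. \<exists>f\<in>KF. \<theta> f = g) \<and>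
     (\<forall>f\<in>KF. \<forall>g\<in>KF. \<forall>l<5. \<forall>m<5. vrelK (\<theta> f, l) (\<theta> g, m) \<longleftrightarrow> vrelK (f, l) (g, m))"

lemma face_autD:
  "face_aut \<theta> \<Longrightarrow> f \<in> KF \<Longrightarrow> \<theta> f \<in> KF"
  "face_aut \<theta> \<Longrightarrow> g \<in> KF \<Longrightarrow> \<exists>f\<in>KF. \<theta> f = g"
  "face_aut \<theta> \<Longrightarrow> f \<in> KF \<Longrightarrow> g \<in> KF \<Longrightarrow> l < 5 \<Longrightarrow> m < 5 \<Longrightarrow>
     vrelK (\<theta> f, l) (\<theta> g, m) \<longleftrightarrow> vrelK (f, l) (g, m)"
  unfolding face_aut_def by blast+

lemma face_aut_corner_meets:
  assumes \<theta>: "face_aut \<theta>" and f: "f \<in> KF" and l: "l < 5" "m < 5"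
    and P: "\<And>g. g \<in> KF \<Longrightarrow> P (\<theta> g) \<longleftrightarrow> P g"
  shows "(\<exists>g\<in>KF. P g \<and> vrelK (\<theta> f, l) (g, m)) \<longleftrightarrow> (\<exists>g\<in>KF. P g \<and> vrelK (f, l) (g, m))"
proof
  assume "\<exists>g\<in>KF. P g \<and> vrelK (\<theta> f, l) (g, m)"
  then obtain g where "g \<in> KF" "P g" "vrelK (\<theta> f, l) (g, m)" by blast
  moreover obtain h where "h \<in> KF" "\<theta> h = g" using face_autD(2)[OF \<theta> \<open>g \<in> KF\<close>] by blast
  ultimately show "\<exists>g\<in>KF. P g \<and> vrelK (f, l) (g, m)"
    using face_autD(3)[OF \<theta> f \<open>h \<in> KF\<close> l] P[OF \<open>h \<in> KF\<close>] by auto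
next
  assume "\<exists>g\<in>KF. P g \<and> vrelK (f, l) (g, m)"
  then obtain g where "g \<in> KF" "P g" "vrelK (f, l) (g, m)" by blast
  then show "\<exists>g\<in>KF. P g \<and> vrelK (\<theta> f, l) (g, m)"
    using face_autD(1,3)[OF \<theta>] f l P by blast
qed

lemma face_aut_central_face: "face_aut \<theta> \<Longrightarrow> f \<in> KF \<Longrightarrow> central_face (\<theta> f) \<longleftrightarrow> central_face f"
  unfolding central_face_def using face_aut_corner_meets[of \<theta> f _ _ "\<lambda>_. True"] by simp

lemma face_aut_petal_face: "face_aut \<theta> \<Longrightarrow> f \<in> KF \<Longrightarrow> petal_face i (\<theta> f) \<longleftrightarrow> petal_face i f"
  unfolding petal_face_def using face_aut_corner_meets[of \<theta> f _ _ central_face] face_aut_central_face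
  by simp

lemma face_aut_last_letter:
  assumes \<theta>: "face_aut \<theta>" and f: "f \<in> KF"
  shows "last_letter (\<theta> f) = last_letter f"
proof -
  have \<theta>f: "\<theta> f \<in> KF" using face_autD(1)[OF \<theta> f] .
  have "last_letter f < 6" using f by (rule KF_subfaceE) simp
  then consider "last_letter f = 5" | "last_letter f < 5" by linarith
  then show ?thesis
  proof cases
    case 1
    then show ?thesis using central_face_iff[OF f] central_face_iff[OF \<theta>f] face_aut_central_face[OF \<theta> f]
      by simp
  next
    case 2
    then show ?thesis using petal_face_iff[OF f 2] petal_face_iff[OF \<theta>f 2] face_aut_petal_face[OF \<theta> f]
      by simp
  qed
qed

lemma face_aut_subfaceE:
  assumes \<theta>: "face_aut \<theta>" and x: "x \<in> KF" and b: "b < 6"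
  obtains y where "\<theta> (subface x b) = subface y b" "y \<in> KF"
proof -
  have "\<theta> (subface x b) \<in> KF" using face_autD(1)[OF \<theta> subface_KF[OF x b]] .
  then obtain y c where y: "\<theta> (subface x b) = subface y c" "y \<in> KF" by (rule KF_subfaceE) blast
  then have "c = b" using face_aut_last_letter[OF \<theta> subface_KF[OF x b]] by simp
  then show ?thesis using that y by simp
qed

text \<open>A petal and the central face of the same superface share a vertex \<open>c\<^sub>b\<close>, whose
  birth record names the superface; so \<open>\<theta>\<close> keeps siblings together.\<close>

lemma face_aut_subface:
  assumes \<theta>: "face_aut \<theta>" and x: "x \<in> KF" and b: "b < 6"
  shows "\<theta> (subface x b) = subface (butlast (\<theta> (subface x 5))) b"
proof -
  obtain p where p: "\<theta> (subface x b) = subface p b" "p \<in> KF" using face_aut_subfaceE[OF \<theta> x b] .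
  obtain q where q: "\<theta> (subface x 5) = subface q 5" "q \<in> KF"
    by (rule face_aut_subfaceE[OF \<theta> x, of 5]) auto
  have "p = q"
  proof (cases "b = 5")
    case True
    then show ?thesis using p q by (metis butlast_subface)
  next
    case False
    then have b5: "b < 5" using b by simp
    have "vrelK (subface x 5, (b + 1) mod 5) (subface x b, (b + 2) mod 5)"
      using vrelK_central_petal[OF x b5] subface_petal[OF False] by simp
    then have "vrelK (\<theta> (subface x 5), (b + 1) mod 5) (\<theta> (subface x b), (b + 2) mod 5)"
      using face_autD(3)[OF \<theta> subface_KF[OF x, of 5] subface_KF[OF x b]] by simp
    then have "vrelK (subface q 5, (b + 1) mod 5) (p @ [b], (b + 2) mod 5)"
      using p(1) q(1) subface_petal[OF False] by simp
    moreover have "centre_birth (subface q 5, (b + 1) mod 5) = Some (q, b)"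
      using centre_birth_central[OF q(2), of "(b + 1) mod 5"] b5 by (elim less_5_cases; simp)
    moreover have "centre_birth (p @ [b], (b + 2) mod 5) = Some (p, b)"
      using centre_birth_petal[OF b5, of p] canon_face_KF[OF p(2)] by simp
    ultimately show ?thesis using vrelK_centre_birth_eq by fastforce
  qed
  then show ?thesis using p q by simp
qed

lemma face_aut_parent:
  assumes \<theta>: "face_aut \<theta>"
  shows "face_aut (\<lambda>x. butlast (\<theta> (subface x 5)))"
proof -
  let ?\<theta> = "\<lambda>x. butlast (\<theta> (subface x 5))"
  have closed: "?\<theta> x \<in> KF" if x: "x \<in> KF" for x
  proof -
    obtain y where "\<theta> (subface x 5) = subface y 5" "y \<in> KF"
      by (rule face_aut_subfaceE[OF \<theta> x, of 5]) auto
    then show ?thesis by simp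
  qed
  have onto: "\<exists>f\<in>KF. ?\<theta> f = g" if g: "g \<in> KF" for g
  proof -
    obtain h where h: "h \<in> KF" "\<theta> h = subface g 5"
      using face_autD(2)[OF \<theta> subface_KF[OF g, of 5]] by auto
    obtain x b where "h = subface x b" "x \<in> KF" "b < 6" using h(1) by (rule KF_subfaceE)
    moreover have "b = 5" using face_aut_last_letter[OF \<theta> h(1)] h(2) calculation(1) by simp
    ultimately have "?\<theta> x = g" "x \<in> KF" using h(2) by simp_all
    then show ?thesis by blast
  qed
  have corners: "vrelK (?\<theta> x, l) (?\<theta> y, m) \<longleftrightarrow> vrelK (x, l) (y, m)"
    if x: "x \<in> KF" and y: "y \<in> KF" and l: "l < 5" and m: "m < 5" for x y l m
  proof -
    have "vrelK (x, l) (y, m) \<longleftrightarrow> vrelK (subface x l, l) (subface y m, m)"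
      using vrelK_old_corner_iff subface_petal l m by simp
    also have "\<dots> \<longleftrightarrow> vrelK (\<theta> (subface x l), l) (\<theta> (subface y m), m)"
      using face_autD(3)[OF \<theta> subface_KF[OF x] subface_KF[OF y] l m] l m by simp
    also have "\<dots> \<longleftrightarrow> vrelK (?\<theta> x, l) (?\<theta> y, m)"
      using face_aut_subface[OF \<theta> x, of l] face_aut_subface[OF \<theta> y, of m] l m
        vrelK_old_corner_iff subface_petal by simp
    finally show ?thesis by simp
  qed
  show ?thesis unfolding face_aut_def using closed onto corners by blast
qed

text \<open>The root face \<open>[]\<close> has no parent to induct on; instead induct on the length of its
  image, which drops by one when passing to the induced automorphism of parents.\<close>

lemma face_aut_root: "face_aut \<theta> \<Longrightarrow> \<theta> [] = []"
proof (induction "length (\<theta> [])" arbitrary: \<theta> rule: less_induct)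
  case less
  let ?p = "butlast (\<theta> [])"
  have root: "subface [] 5 = []" "[] \<in> KF" by (simp_all add: subface_def KF_def)
  then have "\<theta> [] = subface ?p 5" using face_aut_subface[OF less.prems root(2), of 5] by simp
  moreover have "?p = []"
  proof (rule ccontr)
    assume "?p \<noteq> []"
    then have "length ?p < length (\<theta> [])" by (cases "\<theta> []" rule: rev_cases) auto
    then show False using less.hyps[OF _ face_aut_parent[OF less.prems]] root(1) \<open>?p \<noteq> []\<close> by simp
  qed
  ultimately show ?case by (simp add: subface_def)
qed

lemma face_aut_id: "face_aut \<theta> \<Longrightarrow> f \<in> KF \<Longrightarrow> \<theta> f = f"
proof (induction "length f" arbitrary: f \<theta> rule: less_induct)
  case less
  obtain x b where f: "f = subface x b" "x \<in> KF" "b < 6" using less.prems(2) by (rule KF_subfaceE)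
  show ?case
  proof (cases "f = []")
    case True
    then show ?thesis using face_aut_root[OF less.prems(1)] by simp
  next
    case False
    then have "length x < length f" using f(1) by (simp add: subface_def split: if_split_asm)
    then have "butlast (\<theta> (subface x 5)) = x"
      using less.hyps[OF _ face_aut_parent[OF less.prems(1)] f(2)] by simp
    then show ?thesis using face_aut_subface[OF less.prems(1) f(2,3)] f(1) by simp
  qed
qed

lemma vcls_same_face_eq:
  "f \<in> KF \<Longrightarrow> l < 5 \<Longrightarrow> l' < 5 \<Longrightarrow> vcls (f, l) = vcls (f, l') \<Longrightarrow> l = l'"
  using vcls_eq_iff_vrelK vrelK_same_face_eq by blast

lemma KF_central_prefix_inj: "x \<in> KF \<Longrightarrow> y \<in> KF \<Longrightarrow> replicate p 5 @ x = replicate q 5 @ y \<Longrightarrow> x = y"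
  by (metis canon_face_KF canon_face_central_prefix)

lemma erelK_endpoints:
  assumes f: "f \<in> KF" and g: "g \<in> KF" and s: "s < 5" and t: "t < 5" and e: "erelK (f, s) (g, t)"
  shows "{vcls (g, t), vcls (g, (t + 1) mod 5)} = {vcls (f, s), vcls (f, (s + 1) mod 5)}"
proof -
  obtain n where n: "length f \<le> n" "length g \<le> n"
    "liftc n (f, s) = liftc n (g, t) \<or> glued n (liftc n (f, s)) (liftc n (g, t))"
    using e unfolding erelK_def by auto
  from n(3) show ?thesis
  proof
    assume "liftc n (f, s) = liftc n (g, t)"
    then show ?thesis using KF_central_prefix_inj[OF f g] by (auto simp: liftc_def)
  next
    assume gl: "glued n (liftc n (f, s)) (liftc n (g, t))"
    have "vglue n (liftc n (f, s)) (liftc n (g, (t + 1) mod 5))"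
      "vglue n (liftc n (f, (s + 1) mod 5)) (liftc n (g, t))"
      using glued_endpoints[OF gl] by (simp_all add: liftc_def)
    then have "vrelK (f, s) (g, (t + 1) mod 5)" "vrelK (f, (s + 1) mod 5) (g, t)"
      unfolding vrelK_def using n(1,2) by auto
    then have "vcls (f, s) = vcls (g, (t + 1) mod 5)" "vcls (f, (s + 1) mod 5) = vcls (g, t)"
      using vcls_eq_iff_vrelK[OF f g] s t by simp_all
    then show ?thesis by auto
  qed
qed

lemma incVE_ecls:
  assumes f: "f \<in> KF" and s: "s < 5"
  shows "incVE v (ecls (f, s)) \<longleftrightarrow> v = vcls (f, s) \<or> v = vcls (f, (s + 1) mod 5)"
proof
  assume "incVE v (ecls (f, s))"
  then obtain g t where g: "g \<in> KF" "t < 5" "ecls (f, s) = ecls (g, t)"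
    and v: "v = vcls (g, t) \<or> v = vcls (g, (t + 1) mod 5)"
    unfolding incVE_def by blast
  have "erelK (g, t) (g, t)" using g(1,2) unfolding erelK_def
    by (intro exI[of _ "length g"]) (simp add: liftc_def wword_def KF_def)
  then have "erelK (f, s) (g, t)" using g(3) by (simp add: ecls_def set_eq_iff)
  then show "v = vcls (f, s) \<or> v = vcls (f, (s + 1) mod 5)"
    using erelK_endpoints[OF f g(1) s g(2)] v by blast
next
  assume "v = vcls (f, s) \<or> v = vcls (f, (s + 1) mod 5)"
  then show "incVE v (ecls (f, s))" unfolding incVE_def using f s by blast
qed

lemma cell_aut_face_aut:
  assumes aut: "cell_aut \<phi>V \<phi>E \<phi>F" and dec: "decoration_preserving \<phi>V \<phi>F"
  shows "face_aut \<phi>F"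
proof -
  have bV: "bij_betw \<phi>V KV KV" and bF: "bij_betw \<phi>F KF KF"
    using aut unfolding cell_aut_def by auto
  have corners: "vrelK (\<phi>F f, l) (\<phi>F g, m) \<longleftrightarrow> vrelK (f, l) (g, m)"
    if f: "f \<in> KF" and g: "g \<in> KF" and l: "l < 5" and m: "m < 5" for f g l m
  proof -
    have "corner f l \<in> KV" "corner g m \<in> KV" using f g l m unfolding KV_def corner_def by blast+
    then have "corner f l = corner g m \<longleftrightarrow> \<phi>V (corner f l) = \<phi>V (corner g m)"
      using bij_betw_imp_inj_on[OF bV] by (simp add: inj_on_eq_iff)
    also have "\<dots> \<longleftrightarrow> corner (\<phi>F f) l = corner (\<phi>F g) m"
      using dec f g l m unfolding decoration_preserving_def by simp
    finally show ?thesis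
      using vcls_eq_iff_vrelK f g l m bij_betw_apply[OF bF] unfolding corner_def by simp
  qed
  show ?thesis unfolding face_aut_def
  proof (intro conjI ballI allI impI)
    show "\<phi>F f \<in> KF" if "f \<in> KF" for f using bij_betw_apply[OF bF that] .
    show "\<exists>f\<in>KF. \<phi>F f = g" if "g \<in> KF" for g
      using bij_betw_imp_surj_on[OF bF] that by (metis imageE)
  qed (rule corners)
qed

lemma cell_aut_fixes_edges:
  assumes aut: "cell_aut \<phi>V \<phi>E \<phi>F"
    and F: "\<forall>f\<in>KF. \<phi>F f = f" and V: "\<forall>v\<in>KV. \<phi>V v = v" and e: "e \<in> KE"
  shows "\<phi>E e = e"
proof -
  obtain f s where f: "f \<in> KF" and s: "s < 5" and e_def: "e = ecls (f, s)" using e unfolding KE_def by blast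
  have iVE: "\<forall>v\<in>KV. \<forall>e\<in>KE. incVE v e \<longleftrightarrow> incVE (\<phi>V v) (\<phi>E e)"
    and iEF: "\<forall>e\<in>KE. \<forall>f\<in>KF. incEF e f \<longleftrightarrow> incEF (\<phi>E e) (\<phi>F f)"
    using aut unfolding cell_aut_def by blast+
  have "incEF e f" unfolding incEF_def using s e_def by blast
  then have "incEF (\<phi>E e) f" using iEF e f F by auto
  then obtain s' where s': "s' < 5" "\<phi>E e = ecls (f, s')" unfolding incEF_def by blast
  have end_moves: "k = s' \<or> k = (s' + 1) mod 5" if k: "k = s \<or> k = (s + 1) mod 5" for k
  proof -
    have "k < 5" using k s by auto
    then have v: "vcls (f, k) \<in> KV" using f unfolding KV_def by blast
    have "incVE (vcls (f, k)) e" using incVE_ecls[OF f s] k e_def by blast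
    then have "incVE (\<phi>V (vcls (f, k))) (\<phi>E e)" using iVE v e by blast
    then have "incVE (vcls (f, k)) (\<phi>E e)" using V v by simp
    then have "vcls (f, k) = vcls (f, s') \<or> vcls (f, k) = vcls (f, (s' + 1) mod 5)"
      using incVE_ecls[OF f s'(1)] s'(2) by simp
    then show ?thesis using vcls_same_face_eq[OF f] k s s'(1) by auto
  qed
  have "s = s' \<or> s = (s' + 1) mod 5" "(s + 1) mod 5 = s' \<or> (s + 1) mod 5 = (s' + 1) mod 5"
    using end_moves by simp_all
  then have "s = s'" using s s'(1) by (elim less_5_cases; elim less_5_cases; simp)
  then show ?thesis using s'(2) e_def by simp
qed

theorem mainTheorem5:
  assumes "cell_aut \<phi>V \<phi>E \<phi>F"
    and "decoration_preserving \<phi>V \<phi>F"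
  shows "(\<forall>v\<in>KV. \<phi>V v = v) \<and> (\<forall>e\<in>KE. \<phi>E e = e) \<and> (\<forall>f\<in>KF. \<phi>F f = f)"
proof -
  have F: "\<forall>f\<in>KF. \<phi>F f = f"
    using face_aut_id[OF cell_aut_face_aut[OF assms]] by blast
  have V: "\<forall>v\<in>KV. \<phi>V v = v"
    using assms(2) F unfolding KV_def decoration_preserving_def corner_def by auto
  show ?thesis using cell_aut_fixes_edges[OF assms(1) F V] F V by blast
qed

end
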